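(* Let $(\mathbf{P},d_{\mathbf{P}})$ be a finite metric poset. (1) For nonnegative bounded complexes $E_\bullet,F_\bullet$ of projective $\mathbf{P}$-modules (with fixed decompositions of their terms into indecomposables), the following are equivalent: (a) $\mathrm{dist}'_{\mathrm{R}}(E_\bullet,F_\bullet)=0$; (b) there is a pre-matching $B$ of $(E_\bullet,F_\bullet)$ with $\mathrm{cost}(B)=0$; (c) $[E_\bullet]=[F_\bullet]$. (2) For $\mathbf{P}$-modules $M,N$ with minimal projective resolutions $P^M_\bullet,P^N_\bullet$, the following are equivalent: (a) $\mathrm{dist}'_{\mathrm{B}}(P^M_\bullet,P^N_\bullet)=0$; (b) there exist a projective resolution $E_\bullet$ of $M$ and $F_\bullet$ of $N$ with $|E_i|=|F_i|$ for all $i$ and a pre-matching $B$ of $(E_\bullet,F_\bullet)$ with $\mathrm{cost}(B)=0$; (c) $[P^M_\bullet]-[P^N_\bullet]$ lies in the subgroup of $K_{\mathrm{prj}}(\mathbf{P})^{(\mathbb{N})}$ generated by the elements $[\mathrm{Cone}(\mathrm{id}_{k[\mathbf{P}]_x})[i]]$, $x\in\mathbf{P}$, $i\in\mathbb{N}$; (d) $\hat{\alpha}([P^M_\bullet])=\hat{\alpha}([P^N_\bullet])$. In particular, if $\mathrm{dist}_{\mathrm{B}}(P^M_\bullet,P^N_\bullet)=0$, then $\hat{\alpha}([P^M_\bullet])=\hat{\alpha}([P^N_\bullet])$.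
   Context: Fix a field $k$; a $\mathbf{P}$-module is a functor from the finite poset $\mathbf{P}$ (as a category) to finite-dimensional $k$-vector spaces. For $x\in\mathbf{P}$, $k[\mathbf{P}]_x$ is the module with value $k$ at $y\ge x$, $0$ elsewhere, identity maps; these are the indecomposable projectives. $K_{\mathrm{prj}}(\mathbf{P})$ is the split Grothendieck group of projective $\mathbf{P}$-modules (free on $[k[\mathbf{P}]_x]$); for a nonnegative bounded complex $E_\bullet=(E_i)_{i\in\mathbb{N}}$ of projectives, $[E_\bullet]=([E_i])_{i\in\mathbb{N}}\in K_{\mathrm{prj}}(\mathbf{P})^{(\mathbb{N})}$ (finitely supported sequences); $\hat{\alpha}((A_i)_i)=\sum_i(-1)^iA_i$. $\mathrm{Cone}(\mathrm{id}_E)[a]$ is the complex with $E$ in degrees $a+1$ and $a$ joined by $\mathrm{id}_E$, zero elsewhere. Each term $E_i$ is a direct sum $\bigoplus_{x\in\mathrm{smd}(E_i)}k[\mathbf{P}]_x$ with a fixed decomposition ($\mathrm{smd}$ = indexed multiset of indices), $|E_i|$ its number of summands. For $y\le x$ let $\rho(x\ge y):k[\mathbf{P}]_x\to k[\mathbf{P}]_y$ be the canonical morphism (identity at each $z\ge x$), $\rho(x\ge y)=0$ otherwise; a morphism between decomposed projectives is uniquely $[a_{x,y}\rho(x\ge y)]$ with $a_{x,y}=0$ unless $x\ge y$, and $\mathrm{Mat}$ is $[a_{x,y}]$. A pre-matching of $(E_\bullet,F_\bullet)$ is a family of bijections $B_i:\mathrm{smd}(E_i)\to\mathrm{smd}(F_i)$,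 $i\ge0$; its cost is $\sup\{d_{\mathbf{P}}(x,B_i(x))\mid i,x\in\mathrm{smd}(E_i)\}$. A matching is a pre-matching such that the $(x',x)$-entry of $\mathrm{Mat}(\partial^E_i)$ equals the $(B_{i+1}(x'),B_i(x))$-entry of $\mathrm{Mat}(\partial^F_i)$ for all $i$, $x\in\mathrm{smd}(E_i)$, $x'\in\mathrm{smd}(E_{i+1})$. $\mathrm{dist}'_{\mathrm{R}}(E_\bullet,F_\bullet)$ (resp. $\mathrm{dist}_{\mathrm{R}}$) is the infimum of costs of pre-matchings (resp. matchings), $\infty$ if none. For $\mathbf{P}$-modules, with $\mathsf{Res}(P^M_\bullet,P^N_\bullet)$ the set of pairs $(E_\bullet,F_\bullet)$ of projective resolutions of $M$ and $N$ with $|E_i|=|F_i|$ for all $i$, $\mathrm{dist}'_{\mathrm{B}}(P^M_\bullet,P^N_\bullet)$ (resp. $\mathrm{dist}_{\mathrm{B}}$) is the infimum of $\mathrm{dist}'_{\mathrm{R}}$ (resp. $\mathrm{dist}_{\mathrm{R}}$) over $\mathsf{Res}(P^M_\bullet,P^N_\bullet)$, $\infty$ if empty. *)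

theory Defs
  imports "Jordan_Normal_Form.Matrix" "HOL-Library.Multiset"
    "HOL-Library.Extended_Nonnegative_Real"
begin

definition metric_on :: "('p \<Rightarrow> 'p \<Rightarrow> real) \<Rightarrow> bool" where
  "metric_on d \<longleftrightarrow> (\<forall>x y. d x y \<ge> 0) \<and> (\<forall>x y. d x y = 0 \<longleftrightarrow> x = y)
     \<and> (\<forall>x y. d x y = d y x) \<and> (\<forall>x y z. d x z \<le> d x y + d y z)"

text \<open>A P-module is given up to isomorphism by a dimension vector and structure matrices:
  the space at x is k^(mdim x), and for x \<le> y the map M(x \<le> y) is the matrix mact x y
  of size mdim y \<times> mdim x.\<close>

record ('p, 'k) pmod =
  mdim :: "'p \<Rightarrow> nat"
  mact :: "'p \<Rightarrow> 'p \<Rightarrow> 'k mat"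

definition is_pmod :: "('p::order, 'k::field) pmod \<Rightarrow> bool" where
  "is_pmod M \<longleftrightarrow>
     (\<forall>x y. x \<le> y \<longrightarrow> mact M x y \<in> carrier_mat (mdim M y) (mdim M x))
   \<and> (\<forall>x. mact M x x = 1\<^sub>m (mdim M x))
   \<and> (\<forall>x y z. x \<le> y \<and> y \<le> z \<longrightarrow> mact M x z = mact M y z * mact M x y)"

text \<open>E_i = direct sum of k[P]_x for x in the list smd E i (summands indexed by positions
  0..<length).  dmat E i j l is the entry a_{x',x} of Mat(\<partial>_i : E_{i+1} \<rightarrow> E_i) for the
  j-th summand x' of E_{i+1} and the l-th summand x of E_i.\<close>

record ('p, 'k) cplx =
  smd  :: "nat \<Rightarrow> 'p list"
  dmat :: "nat \<Rightarrow> nat \<Rightarrow> nat \<Rightarrow> 'k"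

definition nsmd :: "('p, 'k) cplx \<Rightarrow> nat \<Rightarrow> nat" where
  "nsmd E i = length (smd E i)"

text \<open>Value of E_i at z: vectors in k^|E_i| supported on summands x with x \<le> z.\<close>
definition Ept :: "('p::order, 'k::field) cplx \<Rightarrow> nat \<Rightarrow> 'p \<Rightarrow> 'k vec set" where
  "Ept E i z = {v \<in> carrier_vec (nsmd E i). \<forall>j < nsmd E i. \<not> (smd E i ! j \<le> z) \<longrightarrow> v $ j = 0}"

text \<open>The differential \<partial>_i at a point (the same matrix at each point, restricted).\<close>
definition dapp :: "('p, 'k::field) cplx \<Rightarrow> nat \<Rightarrow> 'k vec \<Rightarrow> 'k vec" where
  "dapp E i v = vec (nsmd E i) (\<lambda>l. \<Sum>j<nsmd E (Suc i). dmat E i j l * v $ j)"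

definition is_cplx :: "('p::order, 'k::field) cplx \<Rightarrow> bool" where
  "is_cplx E \<longleftrightarrow>
     (\<forall>i j l. j < nsmd E (Suc i) \<and> l < nsmd E i \<and> \<not> (smd E i ! l \<le> smd E (Suc i) ! j)
          \<longrightarrow> dmat E i j l = 0)
   \<and> (\<forall>i z. \<forall>v \<in> Ept E (Suc (Suc i)) z. dapp E i (dapp E (Suc i) v) = 0\<^sub>v (nsmd E i))
   \<and> (\<exists>n. \<forall>i \<ge> n. smd E i = [])"

text \<open>An augmentation E_0 \<rightarrow> M is given (Yoneda) by elements aug j \<in> M(x_j) for the
  summands x_j of E_0; at z it sends e_j (x_j \<le> z) to M(x_j \<le> z)(aug j).\<close>
definition eps_app :: "('p::order, 'k::field) pmod \<Rightarrow> ('p, 'k) cplx \<Rightarrow> (nat \<Rightarrow> 'k vec)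
    \<Rightarrow> 'p \<Rightarrow> 'k vec \<Rightarrow> 'k vec" where
  "eps_app M E aug z v = vec (mdim M z)
     (\<lambda>r. \<Sum>j | j < nsmd E 0 \<and> smd E 0 ! j \<le> z. v $ j * (mact M (smd E 0 ! j) z *\<^sub>v aug j) $ r)"

definition is_res_aug :: "('p::order, 'k::field) pmod \<Rightarrow> ('p, 'k) cplx \<Rightarrow> (nat \<Rightarrow> 'k vec) \<Rightarrow> bool" where
  "is_res_aug M E aug \<longleftrightarrow> is_cplx E
   \<and> (\<forall>j < nsmd E 0. aug j \<in> carrier_vec (mdim M (smd E 0 ! j)))
   \<and> (\<forall>z. eps_app M E aug z ` Ept E 0 z = carrier_vec (mdim M z))
   \<and> (\<forall>z. {v \<in> Ept E 0 z. eps_app M E aug z v = 0\<^sub>v (mdim M z)} = dapp E 0 ` Ept E 1 z)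
   \<and> (\<forall>i z. {v \<in> Ept E (Suc i) z. dapp E i v = 0\<^sub>v (nsmd E i)} = dapp E (Suc i) ` Ept E (Suc (Suc i)) z)"

definition is_proj_res :: "('p::order, 'k::field) pmod \<Rightarrow> ('p, 'k) cplx \<Rightarrow> bool" where
  "is_proj_res M E \<longleftrightarrow> (\<exists>aug. is_res_aug M E aug)"

text \<open>Radical of E_i at z: vectors with zero coefficient on all summands equal to z.\<close>
definition in_rad :: "('p::order, 'k::field) cplx \<Rightarrow> nat \<Rightarrow> 'p \<Rightarrow> 'k vec \<Rightarrow> bool" where
  "in_rad E i z v \<longleftrightarrow> (\<forall>j < nsmd E i. smd E i ! j = z \<longrightarrow> v $ j = 0)"

definition is_min_proj_res :: "('p::order, 'k::field) pmod \<Rightarrow> ('p, 'k) cplx \<Rightarrow> bool" where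
  "is_min_proj_res M E \<longleftrightarrow> (\<exists>aug. is_res_aug M E aug
     \<and> (\<forall>z. \<forall>v \<in> Ept E 0 z. eps_app M E aug z v = 0\<^sub>v (mdim M z) \<longrightarrow> in_rad E 0 z v)
     \<and> (\<forall>i z. \<forall>v \<in> Ept E (Suc i) z. dapp E i v = 0\<^sub>v (nsmd E i) \<longrightarrow> in_rad E (Suc i) z v))"

text \<open>K_prj(P)^(N) is represented by functions nat \<Rightarrow> 'p \<Rightarrow> int (free abelian on P in
  each degree), finitely supported in the degree.\<close>

definition cls :: "('p, 'k) cplx \<Rightarrow> nat \<Rightarrow> 'p \<Rightarrow> int" where
  "cls E = (\<lambda>i x. int (count (mset (smd E i)) x))"

definition alpha_hat :: "(nat \<Rightarrow> 'p \<Rightarrow> int) \<Rightarrow> 'p \<Rightarrow> int" where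
  "alpha_hat A = (\<lambda>x. \<Sum>i \<in> {i. A i \<noteq> (\<lambda>_. 0)}. (-1) ^ i * A i x)"

definition cone_cls :: "'p \<Rightarrow> nat \<Rightarrow> nat \<Rightarrow> 'p \<Rightarrow> int" where
  "cone_cls x a = (\<lambda>j y. if (j = a \<or> j = Suc a) \<and> y = x then 1 else 0)"

inductive_set cone_subgroup :: "(nat \<Rightarrow> 'p \<Rightarrow> int) set" where
  zero: "(\<lambda>_ _. 0) \<in> cone_subgroup"
| add: "A \<in> cone_subgroup \<Longrightarrow> (\<lambda>j y. A j y + cone_cls x a j y) \<in> cone_subgroup"
| sub: "A \<in> cone_subgroup \<Longrightarrow> (\<lambda>j y. A j y - cone_cls x a j y) \<in> cone_subgroup"

definition prematching :: "('p, 'k) cplx \<Rightarrow> ('p, 'k) cplx \<Rightarrow> (nat \<Rightarrow> nat \<Rightarrow> nat) \<Rightarrow> bool" where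
  "prematching E F B \<longleftrightarrow> (\<forall>i. bij_betw (B i) {..<nsmd E i} {..<nsmd F i})"

definition matching :: "('p, 'k) cplx \<Rightarrow> ('p, 'k) cplx \<Rightarrow> (nat \<Rightarrow> nat \<Rightarrow> nat) \<Rightarrow> bool" where
  "matching E F B \<longleftrightarrow> prematching E F B \<and>
     (\<forall>i j l. j < nsmd E (Suc i) \<and> l < nsmd E i \<longrightarrow>
        dmat E i j l = dmat F i (B (Suc i) j) (B i l))"

definition cost :: "('p \<Rightarrow> 'p \<Rightarrow> real) \<Rightarrow> ('p, 'k) cplx \<Rightarrow> ('p, 'k) cplx
    \<Rightarrow> (nat \<Rightarrow> nat \<Rightarrow> nat) \<Rightarrow> ennreal" where
  "cost d E F B = (SUP i. SUP j \<in> {..<nsmd E i}. ennreal (d (smd E i ! j) (smd F i ! B i j)))"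

definition distR' :: "('p \<Rightarrow> 'p \<Rightarrow> real) \<Rightarrow> ('p, 'k) cplx \<Rightarrow> ('p, 'k) cplx \<Rightarrow> ennreal" where
  "distR' d E F = (INF B \<in> {B. prematching E F B}. cost d E F B)"

definition distR :: "('p \<Rightarrow> 'p \<Rightarrow> real) \<Rightarrow> ('p, 'k) cplx \<Rightarrow> ('p, 'k) cplx \<Rightarrow> ennreal" where
  "distR d E F = (INF B \<in> {B. matching E F B}. cost d E F B)"

definition Res :: "('p::order, 'k::field) pmod \<Rightarrow> ('p, 'k) pmod \<Rightarrow> (('p, 'k) cplx \<times> ('p, 'k) cplx) set" where
  "Res M N = {(E, F). is_proj_res M E \<and> is_proj_res N F \<and> (\<forall>i. nsmd E i = nsmd F i)}"

text \<open>dist'_B(P^M, P^N) and dist_B(P^M, P^N) depend only on M and N.\<close>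
definition distB' :: "('p::order \<Rightarrow> 'p \<Rightarrow> real) \<Rightarrow> ('p, 'k::field) pmod \<Rightarrow> ('p, 'k) pmod \<Rightarrow> ennreal" where
  "distB' d M N = (INF EF \<in> Res M N. distR' d (fst EF) (snd EF))"

definition distB :: "('p::order \<Rightarrow> 'p \<Rightarrow> real) \<Rightarrow> ('p, 'k::field) pmod \<Rightarrow> ('p, 'k) pmod \<Rightarrow> ennreal" where
  "distB d M N = (INF EF \<in> Res M N. distR d (fst EF) (snd EF))"

end

theory Submission
  imports Defs "Jordan_Normal_Form.VS_Connect" "HOL-Combinatorics.Permutations"
begin

(*
  Part (1): since P is finite, the metric has a positive minimal distance \<delta>, so every
  pre-matching of cost < \<delta> sends each summand to a summand with the same label. Hence
  dist'_R = 0 iff some pre-matching has cost 0, iff E and F have the same multisets of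
  labels in each degree, i.e. [E] = [F].

  Part (2): evaluating a projective resolution E of M at z gives an exact sequence of finite
  dimensional spaces, so by rank-nullity the alternating sum of the numbers of summands
  x \<le> z of E equals dim M(z); Moebius inversion over the finite poset shows that
  alpha_hat [E] depends only on M. Conversely, if alpha_hat [P^M] = alpha_hat [P^N], then
  [P^M] - [P^N] has alternating sum zero at every point and is therefore an integer
  combination of classes of cones Cone(id)[i]. Adding these cones (which keeps resolutions
  resolutions) to P^M and P^N produces resolutions with equal classes, and those admit a
  pre-matching of cost 0.
*)

definition coord_subspace :: "nat \<Rightarrow> (nat \<Rightarrow> bool) \<Rightarrow> 'k::field vec set" where
  "coord_subspace n Q = {v \<in> carrier_vec n. \<forall>j<n. \<not> Q j \<longrightarrow> v $ j = 0}"

definition subspace_dim :: "nat \<Rightarrow> 'k::field vec set \<Rightarrow> nat" where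
  "subspace_dim n S = vectorspace.dim class_ring ((module_vec TYPE('k) n)\<lparr>carrier := S\<rparr>)"

lemma submodule_coord_subspace:
  "submodule class_ring (coord_subspace n Q) (module_vec TYPE('k::field) n)"
  using vec_module[where 'a='k and n=n] unfolding submodule_def
  by (auto simp: coord_subspace_def module_vec_simps class_ring_simps)

lemma coord_subspace_carrier_vec: "carrier_vec n = coord_subspace n (\<lambda>_. True)"
  by (simp add: coord_subspace_def)

lemma span_unit_vec_coord_subspace:
  "module.span class_ring (module_vec TYPE('k::field) n) (unit_vec n ` {j. j < n \<and> Q j})
    = coord_subspace n Q"
proof -
  interpret vec_space "TYPE('k)" n .
  let ?J = "{j. j < n \<and> Q j}"
  let ?U = "unit_vec n ` ?J :: 'k vec set"
  have finU: "finite ?U" and Uc: "?U \<subseteq> carrier_vec n" by auto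
  have U_sub: "?U \<subseteq> coord_subspace n Q" by (auto simp: coord_subspace_def)
  have "coord_subspace n Q \<subseteq> span ?U"
  proof
    fix v :: "'k vec" assume v: "v \<in> coord_subspace n Q"
    define c where "c = (\<lambda>u::'k vec. v $ (THE i. u = unit_vec n i))"
    have c_unit: "c (unit_vec n j) = v $ j" if "j < n" for j
      unfolding c_def using that by (metis (mono_tags, lifting) the_equality unit_vec_eq)
    have "lincomb c ?U = v"
    proof (rule eq_vecI)
      show "dim_vec (lincomb c ?U) = dim_vec v"
        using lincomb_dim[OF finU Uc] v by (auto simp: coord_subspace_def)
      fix i assume "i < dim_vec v"
      hence i: "i < n" using v by (auto simp: coord_subspace_def)
      have inj: "inj_on (unit_vec n :: nat \<Rightarrow> 'k vec) ?J" by (auto simp: inj_on_def)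
      have "lincomb c ?U $ i = (\<Sum>u\<in>?U. c u * u $ i)" using lincomb_index[OF i Uc] .
      also have "\<dots> = (\<Sum>j\<in>?J. v $ j * (unit_vec n j :: 'k vec) $ i)"
        by (subst sum.reindex[OF inj]) (auto simp: c_unit intro!: sum.cong)
      also have "\<dots> = (\<Sum>j\<in>?J. if j = i then v $ i else 0)"
        using i by (intro sum.cong) auto
      also have "\<dots> = v $ i" using v i by (auto simp: coord_subspace_def)
      finally show "lincomb c ?U $ i = v $ i" .
    qed
    then show "v \<in> span ?U" unfolding finite_span[OF finU Uc] by auto
  qed
  moreover have "span ?U \<subseteq> coord_subspace n Q"
    using U_sub submodule_coord_subspace by (rule span_is_subset)
  ultimately show ?thesis by blast
qed

lemma
  fixes Q :: "nat \<Rightarrow> bool"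
  shows subspace_dim_coord_subspace:
      "subspace_dim n (coord_subspace n Q :: 'k::field vec set) = card {j. j < n \<and> Q j}"
    and fin_dim_coord_subspace:
      "vectorspace.fin_dim class_ring ((module_vec TYPE('k) n)\<lparr>carrier := coord_subspace n Q\<rparr>)"
proof -
  interpret vec_space "TYPE('k)" n .
  let ?S = "coord_subspace n Q :: 'k vec set"
  let ?U = "unit_vec n ` {j. j < n \<and> Q j} :: 'k vec set"
  have sub: "submodule class_ring ?S V" by (rule submodule_coord_subspace)
  have vs: "vectorspace class_ring (vs ?S)"
    using subspace_is_vs sub vec_vs unfolding subspace_def by auto
  have U_S: "?U \<subseteq> ?S" and finU: "finite ?U" by (auto simp: coord_subspace_def)
  have span: "span ?U = ?S" by (rule span_unit_vec_coord_subspace)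
  have "lin_indpt ?U"
  proof (rule subset_li_is_li)
    show "lin_indpt (set (unit_vecs n))" using unit_vecs_basis unfolding basis_def by auto
    show "?U \<subseteq> set (unit_vecs n)" unfolding unit_vecs_def by auto
  qed
  then have basis: "vectorspace.basis class_ring (vs ?S) ?U"
    using span_li_not_depend[OF U_S sub] span U_S vectorspace.basis_def[OF vs] by auto
  have "vectorspace.dim class_ring (vs ?S) = card ?U"
    by (rule vectorspace.dim_basis[OF vs finU basis])
  also have "\<dots> = card {j. j < n \<and> Q j}" by (rule card_image) (auto simp: inj_on_def)
  finally show "subspace_dim n ?S = card {j. j < n \<and> Q j}" unfolding subspace_dim_def .
  show "vectorspace.fin_dim class_ring (vs ?S)"
    unfolding vectorspace.fin_dim_def[OF vs]
    using finU U_S span_li_not_depend(1)[OF U_S sub] span by (intro exI[of _ ?U]) auto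
qed

lemma subspace_dim_carrier_vec: "subspace_dim n (carrier_vec n :: 'k::field vec set) = n"
  by (simp add: coord_subspace_carrier_vec subspace_dim_coord_subspace)

lemma subspace_dim_rank_nullity:
  fixes T :: "'k::field vec \<Rightarrow> 'k vec"
  assumes sub: "submodule class_ring S (module_vec TYPE('k) n)"
    and fin_dim_S: "vectorspace.fin_dim class_ring ((module_vec TYPE('k) n)\<lparr>carrier := S\<rparr>)"
    and T_carrier: "T ` S \<subseteq> carrier_vec m"
    and T_add: "\<And>u v. u \<in> S \<Longrightarrow> v \<in> S \<Longrightarrow> T (u + v) = T u + T v"
    and T_smult: "\<And>c v. v \<in> S \<Longrightarrow> T (c \<cdot>\<^sub>v v) = c \<cdot>\<^sub>v T v"
  shows "subspace_dim n S = subspace_dim m (T ` S) + subspace_dim n {v \<in> S. T v = 0\<^sub>v m}"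
proof -
  interpret vec_space "TYPE('k)" n .
  have vsS: "vectorspace class_ring (vs S)"
    using subspace_is_vs sub vec_vs unfolding subspace_def by blast
  have vsW: "vectorspace (class_ring :: 'k ring) (module_vec TYPE('k) m)" by (rule vec_vs)
  interpret L: linear_map class_ring "(module_vec TYPE('k) n)\<lparr>carrier := S\<rparr>" "module_vec TYPE('k) m" T
    unfolding linear_map_def mod_hom_def mod_hom_axioms_def module_hom_def
    using vsS vsW T_carrier T_add T_smult unfolding vectorspace_def
    by (auto simp: module_vec_simps class_ring_simps)
  have "L.imT = T ` S" unfolding L.im_def by simp
  moreover have "L.kerT = {v \<in> S. T v = 0\<^sub>v m}" unfolding L.ker_def by (simp add: module_vec_simps)
  ultimately show ?thesis
    using L.rank_nullity[OF fin_dim_S] unfolding subspace_dim_def by simp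
qed

section \<open>Euler characteristic of a projective resolution\<close>

lemma vec_first_index [simp]: "j < n \<Longrightarrow> vec_first v n $ j = v $ j"
  by (simp add: vec_first_def)

lemma Ept_eq_coord_subspace: "Ept E i z = coord_subspace (nsmd E i) (\<lambda>j. smd E i ! j \<le> z)"
  by (simp add: Ept_def coord_subspace_def)

lemma subspace_dim_Ept:
  "subspace_dim (nsmd E i) (Ept E i z) = card {j. j < nsmd E i \<and> smd E i ! j \<le> z}"
  by (simp add: Ept_eq_coord_subspace subspace_dim_coord_subspace)

lemma Ept_rank_nullity:
  assumes "T ` Ept E i z \<subseteq> carrier_vec m"
    and "\<And>u v. u \<in> Ept E i z \<Longrightarrow> v \<in> Ept E i z \<Longrightarrow> T (u + v) = T u + T v"
    and "\<And>c v. v \<in> Ept E i z \<Longrightarrow> T (c \<cdot>\<^sub>v v) = c \<cdot>\<^sub>v T v"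
  shows "subspace_dim (nsmd E i) (Ept E i z)
    = subspace_dim m (T ` Ept E i z) + subspace_dim (nsmd E i) {v \<in> Ept E i z. T v = 0\<^sub>v m}"
  using assms unfolding Ept_eq_coord_subspace
  by (intro subspace_dim_rank_nullity submodule_coord_subspace fin_dim_coord_subspace)

lemma dim_dapp [simp]: "dim_vec (dapp E i v) = nsmd E i"
  by (simp add: dapp_def)

lemma dapp_carrier: "dapp E i v \<in> carrier_vec (nsmd E i)"
  by (simp add: dapp_def)

lemma dapp_add:
  "u \<in> carrier_vec (nsmd E (Suc i)) \<Longrightarrow> v \<in> carrier_vec (nsmd E (Suc i))
    \<Longrightarrow> dapp E i (u + v) = dapp E i u + dapp E i v"
  unfolding dapp_def by (intro eq_vecI) (auto simp: distrib_left sum.distrib)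

lemma dapp_smult: "v \<in> carrier_vec (nsmd E (Suc i)) \<Longrightarrow> dapp E i (c \<cdot>\<^sub>v v) = c \<cdot>\<^sub>v dapp E i v"
  unfolding dapp_def by (intro eq_vecI) (auto simp: sum_distrib_left algebra_simps)

lemma dapp_cong: "(\<And>j. j < nsmd E (Suc i) \<Longrightarrow> u $ j = v $ j) \<Longrightarrow> dapp E i u = dapp E i v"
  unfolding dapp_def by (intro eq_vecI) auto

lemma dapp_vec_first: "dapp E i (vec_first v (nsmd E (Suc i))) = dapp E i v"
  by (rule dapp_cong) simp

lemma dapp_in_Ept:
  assumes "is_cplx E" and "u \<in> Ept E (Suc i) z"
  shows "dapp E i u \<in> Ept E i z"
proof -
  have "dapp E i u $ l = 0" if l: "l < nsmd E i" "\<not> smd E i ! l \<le> z" for l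
  proof -
    have terms_0: "dmat E i j l * u $ j = 0" if j: "j < nsmd E (Suc i)" for j
    proof (cases "smd E (Suc i) ! j \<le> z")
      case True
      then have "\<not> smd E i ! l \<le> smd E (Suc i) ! j" using l(2) order_trans by blast
      then show ?thesis using assms(1) j l(1) unfolding is_cplx_def by simp
    next
      case False
      then show ?thesis using assms(2) j by (simp add: Ept_def)
    qed
    have "(\<Sum>j<nsmd E (Suc i). dmat E i j l * u $ j) = 0"
      using terms_0 by (intro sum.neutral) blast
    then show ?thesis using l(1) by (simp add: dapp_def)
  qed
  then show ?thesis by (simp add: Ept_def dapp_carrier)
qed

lemma eps_app_carrier: "eps_app M E aug z v \<in> carrier_vec (mdim M z)"
  by (simp add: eps_app_def)

lemma eps_app_add:
  "u \<in> carrier_vec (nsmd E 0) \<Longrightarrow> v \<in> carrier_vec (nsmd E 0)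
    \<Longrightarrow> eps_app M E aug z (u + v) = eps_app M E aug z u + eps_app M E aug z v"
  unfolding eps_app_def by (intro eq_vecI) (auto simp: distrib_right sum.distrib)

lemma eps_app_smult:
  "v \<in> carrier_vec (nsmd E 0) \<Longrightarrow> eps_app M E aug z (c \<cdot>\<^sub>v v) = c \<cdot>\<^sub>v eps_app M E aug z v"
  unfolding eps_app_def by (intro eq_vecI) (auto simp: sum_distrib_left algebra_simps)

lemma cplx_bounded: "is_cplx E \<Longrightarrow> \<exists>N. \<forall>i>N. smd E i = []"
  unfolding is_cplx_def by (meson less_imp_le)

lemma proj_res_imp_cplx: "is_proj_res M E \<Longrightarrow> is_cplx E"
  unfolding is_proj_res_def is_res_aug_def by blast

lemma min_proj_res_imp_proj_res: "is_min_proj_res M E \<Longrightarrow> is_proj_res M E"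
  unfolding is_min_proj_res_def is_proj_res_def by blast

lemma alternating_sum_telescope:
  fixes s k :: "nat \<Rightarrow> int"
  assumes "s 0 = w + k 0" and "\<And>i. s (Suc i) = k i + k (Suc i)"
  shows "(\<Sum>i\<le>n. (-1) ^ i * s i) = w + (-1) ^ n * k n"
  by (induction n) (auto simp: assms algebra_simps)

lemma res_aug_alternating_sum_card:
  assumes res: "is_res_aug M E aug" and bounded: "\<forall>i>N. smd E i = []"
  shows "int (mdim M z) = (\<Sum>i\<le>N. (-1) ^ i * int (card {j. j < nsmd E i \<and> smd E i ! j \<le> z}))"
proof -
  define s where "s i = int (card {j. j < nsmd E i \<and> smd E i ! j \<le> z})" for i
  \<comment> \<open>k i is the dimension of the image of the i-th differential at z; by exactness it is
     also that of the kernel of the map leaving E_i (the augmentation for i = 0).\<close>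
  define k where "k i = int (subspace_dim (nsmd E i) (dapp E i ` Ept E (Suc i) z))" for i
  have surj: "eps_app M E aug z ` Ept E 0 z = carrier_vec (mdim M z)"
    and exact0: "{v \<in> Ept E 0 z. eps_app M E aug z v = 0\<^sub>v (mdim M z)} = dapp E 0 ` Ept E 1 z"
    and exact: "\<And>i. {v \<in> Ept E (Suc i) z. dapp E i v = 0\<^sub>v (nsmd E i)}
                  = dapp E (Suc i) ` Ept E (Suc (Suc i)) z"
    using res unfolding is_res_aug_def by auto
  have "s 0 = int (mdim M z) + k 0"
    using Ept_rank_nullity[of "eps_app M E aug z" E 0 z "mdim M z"]
    unfolding surj exact0 s_def k_def subspace_dim_Ept subspace_dim_carrier_vec
    by (simp add: eps_app_carrier eps_app_add eps_app_smult Ept_def image_subset_iff)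
  moreover have "s (Suc i) = k i + k (Suc i)" for i
    using Ept_rank_nullity[of "dapp E i" E "Suc i" z "nsmd E i"]
    unfolding exact s_def k_def subspace_dim_Ept
    by (simp add: dapp_carrier dapp_add dapp_smult Ept_def image_subset_iff)
  ultimately have "(\<Sum>i\<le>N. (-1) ^ i * s i) = int (mdim M z) + (-1) ^ N * k N"
    by (rule alternating_sum_telescope)
  moreover have "k N = 0"
  proof -
    have "s (Suc N) = 0" using bounded by (simp add: s_def nsmd_def)
    moreover have "s (Suc N) = k N + k (Suc N)" "k N \<ge> 0" "k (Suc N) \<ge> 0"
      using \<open>\<And>i. s (Suc i) = k i + k (Suc i)\<close> by (auto simp: k_def)
    ultimately show ?thesis by linarith
  qed
  ultimately show ?thesis by (simp add: s_def)
qed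

lemma card_nth_eq_sum_count:
  "card {j. j < length xs \<and> P (xs ! j)} = (\<Sum>x\<in>{x::'a::finite. P x}. count (mset xs) x)"
proof -
  have "card {j. j < length xs \<and> P (xs ! j)} = length (filter P xs)"
    by (simp add: length_filter_conv_card)
  also have "\<dots> = (\<Sum>x\<in>{x. P x}. count (mset xs) x)"
  proof (induction xs)
    case Nil
    show ?case by simp
  next
    case (Cons a xs)
    have "(\<Sum>x\<in>{x. P x}. count (mset (a # xs)) x)
        = (\<Sum>x\<in>{x. P x}. count (mset xs) x + (if x = a then 1 else 0))"
      by (intro sum.cong) auto
    also have "\<dots> = (\<Sum>x\<in>{x. P x}. count (mset xs) x) + (if P a then 1 else 0)"
      by (simp add: sum.distrib)
    finally show ?case using Cons by simp
  qed
  finally show ?thesis .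
qed

lemma alpha_hat_eq_sum_atMost:
  "\<forall>i>N. A i = (\<lambda>_. 0) \<Longrightarrow> alpha_hat A x = (\<Sum>i\<le>N. (-1) ^ i * A i x)"
  unfolding alpha_hat_def by (rule sum.mono_neutral_left) (auto simp: not_le)

lemma res_aug_sum_alpha_hat:
  fixes E :: "('p::{finite,order}, 'k::field) cplx"
  assumes "is_res_aug M E aug"
  shows "(\<Sum>x\<in>{..z}. alpha_hat (cls E) x) = int (mdim M z)"
proof -
  have "is_cplx E" using assms unfolding is_res_aug_def by simp
  then obtain N where N: "\<forall>i>N. smd E i = []" using cplx_bounded by blast
  have "int (mdim M z) = (\<Sum>i\<le>N. (-1) ^ i * (\<Sum>x\<in>{..z}. cls E i x))"
    using res_aug_alternating_sum_card[OF assms N, of z]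
    by (simp add: card_nth_eq_sum_count[of "smd E _" "\<lambda>x. x \<le> z", folded nsmd_def] cls_def atMost_def)
  also have "\<dots> = (\<Sum>x\<in>{..z}. \<Sum>i\<le>N. (-1) ^ i * cls E i x)"
    by (simp add: sum_distrib_left sum.swap[of _ "{..z}"])
  also have "\<dots> = (\<Sum>x\<in>{..z}. alpha_hat (cls E) x)"
    using N alpha_hat_eq_sum_atMost[of N "cls E"] by (simp add: cls_def)
  finally show ?thesis by simp
qed

lemma eq_if_sum_atMost_eq:
  fixes f g :: "'a::{finite,order} \<Rightarrow> 'b::cancel_comm_monoid_add"
  assumes "\<And>z. (\<Sum>x\<in>{..z}. f x) = (\<Sum>x\<in>{..z}. g x)"
  shows "f = g"
proof
  fix z
  show "f z = g z"
  proof (induction z rule: measure_induct_rule[of "\<lambda>z. card {..<z}"])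
    case (less z)
    have "f y = g y" if "y < z" for y
      using that by (intro less psubset_card_mono) (auto intro: less_trans)
    then have "(\<Sum>x\<in>{..<z}. f x) = (\<Sum>x\<in>{..<z}. g x)" by (intro sum.cong) auto
    moreover have "{..z} = insert z {..<z}" by auto
    ultimately show ?case using assms[of z] by simp
  qed
qed

lemma proj_res_alpha_hat_unique:
  fixes E F :: "('p::{finite,order}, 'k::field) cplx"
  assumes "is_proj_res M E" and "is_proj_res M F"
  shows "alpha_hat (cls E) = alpha_hat (cls F)"
  using assms unfolding is_proj_res_def
  by (auto intro: eq_if_sum_atMost_eq simp: res_aug_sum_alpha_hat)

section \<open>The cone subgroup\<close>

lemma cone_subgroup_add_multiple:
  assumes "A \<in> cone_subgroup"
  shows "(\<lambda>j y. A j y + c * cone_cls x a j y) \<in> cone_subgroup"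
proof (induction c rule: int_induct[where k = 0])
  case base
  show ?case using assms by simp
next
  case (step1 c)
  show ?case using cone_subgroup.add[OF step1(2), of x a] by (simp add: algebra_simps)
next
  case (step2 c)
  show ?case using cone_subgroup.sub[OF step2(2), of x a] by (simp add: algebra_simps)
qed

lemma cone_subgroup_add_sum_multiples:
  assumes "finite X" and "A \<in> cone_subgroup"
  shows "(\<lambda>j y. A j y + (\<Sum>x\<in>X. c x * cone_cls x a j y)) \<in> cone_subgroup"
  using assms(1)
proof (induction X rule: finite_induct)
  case empty
  show ?case using assms(2) by simp
next
  case (insert x X)
  then show ?case
    using cone_subgroup_add_multiple[OF insert.IH, of "c x" x a] by (simp add: ac_simps)
qed

lemma cone_subgroup_if_alternating_sum_eq_0:
  fixes A :: "nat \<Rightarrow> 'p::finite \<Rightarrow> int"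
  assumes "\<forall>i>N. A i = (\<lambda>_. 0)" and "\<forall>x. (\<Sum>i\<le>N. (-1) ^ i * A i x) = 0"
  shows "A \<in> cone_subgroup"
  using assms
proof (induction N arbitrary: A)
  case 0
  then have "A = (\<lambda>_ _. 0)" by (auto simp: fun_eq_iff) (metis neq0_conv)
  then show ?case by (simp add: cone_subgroup.zero)
next
  case (Suc N)
  \<comment> \<open>Subtracting the cones at y in degrees N, N + 1 with multiplicity A (N + 1) y
     clears the top degree.\<close>
  define A' where "A' j y = A j y - (if j = N \<or> j = Suc N then A (Suc N) y else 0)" for j y
  have "A' \<in> cone_subgroup"
  proof (rule Suc.IH)
    show "\<forall>i>N. A' i = (\<lambda>_. 0)"
      using Suc.prems(1) by (auto simp: A'_def fun_eq_iff Suc_lessI)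
    show "\<forall>x. (\<Sum>i\<le>N. (-1) ^ i * A' i x) = 0"
    proof
      fix x
      have "(\<Sum>i\<le>N. (-1) ^ i * A' i x) = (\<Sum>i\<le>N. (-1) ^ i * A i x) - (-1) ^ N * A (Suc N) x"
        by (simp add: A'_def right_diff_distrib sum_subtractf if_distrib[of "\<lambda>t. _ * t"] sum.delta)
      also have "\<dots> = (\<Sum>i\<le>Suc N. (-1) ^ i * A i x)" by simp
      finally show "(\<Sum>i\<le>N. (-1) ^ i * A' i x) = 0" using Suc.prems(2) by simp
    qed
  qed
  moreover have "A = (\<lambda>j y. A' j y + (\<Sum>x\<in>UNIV. A (Suc N) x * cone_cls x N j y))"
    by (simp add: fun_eq_iff A'_def cone_cls_def if_distrib[of "\<lambda>t. _ * t"] sum.delta)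
  ultimately show ?case
    using cone_subgroup_add_sum_multiples[of UNIV A' "A (Suc N)" N] by simp
qed

lemma cls_diff_in_cone_subgroup:
  fixes E F :: "('p::{finite,order}, 'k::field) cplx"
  assumes "is_cplx E" and "is_cplx F" and "alpha_hat (cls E) = alpha_hat (cls F)"
  shows "(\<lambda>i x. cls E i x - cls F i x) \<in> cone_subgroup"
proof -
  obtain NE NF where "\<forall>i>NE. smd E i = []" and "\<forall>i>NF. smd F i = []"
    using cplx_bounded assms(1,2) by metis
  then have E0: "\<forall>i>max NE NF. cls E i = (\<lambda>_. 0)" and F0: "\<forall>i>max NE NF. cls F i = (\<lambda>_. 0)"
    by (simp_all add: cls_def)
  show ?thesis
  proof (rule cone_subgroup_if_alternating_sum_eq_0[of "max NE NF"])
    show "\<forall>i>max NE NF. (\<lambda>x. cls E i x - cls F i x) = (\<lambda>_. 0)" using E0 F0 by simp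
    show "\<forall>x. (\<Sum>i\<le>max NE NF. (-1) ^ i * (cls E i x - cls F i x)) = 0"
      using assms(3) alpha_hat_eq_sum_atMost[OF E0] alpha_hat_eq_sum_atMost[OF F0]
      by (simp add: right_diff_distrib sum_subtractf)
  qed
qed

section \<open>Adding a cone to a resolution\<close>

(* E \<oplus> Cone(id of k[P]_x)[a]: the summand x is appended in degrees a and a + 1, and the new
   entry of the differential between these two copies is 1. *)
definition add_cone :: "('p, 'k::field) cplx \<Rightarrow> 'p \<Rightarrow> nat \<Rightarrow> ('p, 'k) cplx" where
  "add_cone E x a = \<lparr>smd = (\<lambda>i. smd E i @ (if i = a \<or> i = Suc a then [x] else [])),
    dmat = (\<lambda>i j l. if j < nsmd E (Suc i) \<and> l < nsmd E i then dmat E i j l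
                    else if i = a \<and> j = nsmd E (Suc a) \<and> l = nsmd E a then 1 else 0)\<rparr>"

lemma nsmd_add_cone:
  "nsmd (add_cone E x a) i = nsmd E i + (if i = a \<or> i = Suc a then 1 else 0)"
  by (simp add: add_cone_def nsmd_def)

lemma smd_add_cone_old: "j < nsmd E i \<Longrightarrow> smd (add_cone E x a) i ! j = smd E i ! j"
  by (simp add: add_cone_def nsmd_def nth_append)

lemma smd_add_cone_new: "i = a \<or> i = Suc a \<Longrightarrow> smd (add_cone E x a) i ! nsmd E i = x"
  by (auto simp: add_cone_def nsmd_def)

lemma dmat_add_cone:
  "dmat (add_cone E x a) i j l = (if j < nsmd E (Suc i) \<and> l < nsmd E i then dmat E i j l
     else if i = a \<and> j = nsmd E (Suc a) \<and> l = nsmd E a then 1 else 0)"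
  by (simp add: add_cone_def)

lemma cls_add_cone: "cls (add_cone E x a) i y = cls E i y + cone_cls x a i y"
  unfolding cls_def cone_cls_def add_cone_def by (cases "i = a \<or> i = Suc a") auto

lemma eq_vec_add_coneI:
  assumes "vec_first u (nsmd E i) = vec_first w (nsmd E i)"
    and "i = a \<or> i = Suc a \<Longrightarrow> u $ nsmd E i = w $ nsmd E i"
    and "dim_vec u = nsmd (add_cone E x a) i" and "dim_vec w = nsmd (add_cone E x a) i"
  shows "u = w"
proof (rule eq_vecI)
  fix l assume "l < dim_vec w"
  then consider "l < nsmd E i" | "l = nsmd E i" "i = a \<or> i = Suc a"
    using assms(4) by (fastforce simp: nsmd_add_cone split: if_splits)
  then show "u $ l = w $ l"
  proof cases
    case 1
    then show ?thesis using arg_cong[OF assms(1), of "\<lambda>v. v $ l"] by simp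
  qed (use assms(2) in simp)
qed (use assms in simp)

lemma dapp_add_cone:
  "dapp (add_cone E x a) i v = vec (nsmd (add_cone E x a) i)
     (\<lambda>l. if l < nsmd E i then dapp E i v $ l else if i = a then v $ nsmd E (Suc a) else 0)"
  (is "_ = ?rhs")
proof (rule eq_vecI)
  fix l assume "l < dim_vec ?rhs"
  then have l: "l < nsmd (add_cone E x a) i" by simp
  let ?n = "nsmd E (Suc i)"
  let ?f = "\<lambda>j. dmat (add_cone E x a) i j l * v $ j"
  have split: "(\<Sum>j<nsmd (add_cone E x a) (Suc i). ?f j)
      = (\<Sum>j<?n. ?f j) + (if Suc i = a \<or> i = a then ?f ?n else 0)"
    by (simp add: nsmd_add_cone)
  show "dapp (add_cone E x a) i v $ l = ?rhs $ l"
  proof (cases "l < nsmd E i")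
    case True
    have "(\<Sum>j<?n. ?f j) = (\<Sum>j<?n. dmat E i j l * v $ j)"
      using True by (intro sum.cong) (auto simp: dmat_add_cone)
    moreover have "?f ?n = 0" using True by (auto simp: dmat_add_cone)
    ultimately show ?thesis using l True split by (simp add: dapp_def)
  next
    case False
    have "(\<Sum>j<?n. ?f j) = 0" using False by (intro sum.neutral) (auto simp: dmat_add_cone)
    moreover have "l = nsmd E i" "i = a \<or> i = Suc a"
      using False l by (auto simp: nsmd_add_cone split: if_splits)
    ultimately show ?thesis using l split by (auto simp: dapp_def dmat_add_cone)
  qed
qed (simp add: dapp_def)

lemma vec_first_dapp_add_cone: "vec_first (dapp (add_cone E x a) i v) (nsmd E i) = dapp E i v"
  by (intro eq_vecI) (simp_all add: dapp_add_cone nsmd_add_cone)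

lemma dapp_add_cone_new:
  "i = a \<or> i = Suc a \<Longrightarrow>
    dapp (add_cone E x a) i v $ nsmd E i = (if i = a then v $ nsmd E (Suc a) else 0)"
  by (auto simp: dapp_add_cone nsmd_add_cone)

lemma dapp_add_cone_eq_0_iff:
  "dapp (add_cone E x a) i v = 0\<^sub>v (nsmd (add_cone E x a) i)
    \<longleftrightarrow> dapp E i v = 0\<^sub>v (nsmd E i) \<and> (i = a \<longrightarrow> v $ nsmd E (Suc i) = 0)"
proof
  assume h: "dapp (add_cone E x a) i v = 0\<^sub>v (nsmd (add_cone E x a) i)"
  then have "vec_first (dapp (add_cone E x a) i v) (nsmd E i) = 0\<^sub>v (nsmd E i)"
    and "i = a \<Longrightarrow> dapp (add_cone E x a) i v $ nsmd E i = 0"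
    by (auto simp: nsmd_add_cone)
  then show "dapp E i v = 0\<^sub>v (nsmd E i) \<and> (i = a \<longrightarrow> v $ nsmd E (Suc i) = 0)"
    by (simp add: vec_first_dapp_add_cone dapp_add_cone_new)
next
  assume h: "dapp E i v = 0\<^sub>v (nsmd E i) \<and> (i = a \<longrightarrow> v $ nsmd E (Suc i) = 0)"
  show "dapp (add_cone E x a) i v = 0\<^sub>v (nsmd (add_cone E x a) i)"
    by (rule eq_vec_add_coneI)
      (use h in \<open>auto simp: vec_first_dapp_add_cone dapp_add_cone_new nsmd_add_cone\<close>)
qed

lemma Ept_add_cone_iff:
  "v \<in> Ept (add_cone E x a) i z \<longleftrightarrow> v \<in> carrier_vec (nsmd (add_cone E x a) i)
     \<and> vec_first v (nsmd E i) \<in> Ept E i z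
     \<and> ((i = a \<or> i = Suc a) \<and> \<not> x \<le> z \<longrightarrow> v $ nsmd E i = 0)"
proof -
  have "(\<forall>j<nsmd (add_cone E x a) i. \<not> smd (add_cone E x a) i ! j \<le> z \<longrightarrow> v $ j = 0)
    \<longleftrightarrow> (\<forall>j<nsmd E i. \<not> smd E i ! j \<le> z \<longrightarrow> v $ j = 0)
        \<and> ((i = a \<or> i = Suc a) \<and> \<not> x \<le> z \<longrightarrow> v $ nsmd E i = 0)"
    by (auto simp: nsmd_add_cone smd_add_cone_old smd_add_cone_new less_Suc_eq split: if_splits)
  then show ?thesis by (auto simp: Ept_def)
qed

lemma vec_first_image_Ept_add_cone:
  "(\<lambda>v. vec_first v (nsmd E i)) ` Ept (add_cone E x a) i z = Ept E i z"
proof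
  show "(\<lambda>v. vec_first v (nsmd E i)) ` Ept (add_cone E x a) i z \<subseteq> Ept E i z"
    by (auto simp: Ept_add_cone_iff)
  show "Ept E i z \<subseteq> (\<lambda>v. vec_first v (nsmd E i)) ` Ept (add_cone E x a) i z"
  proof
    fix u assume u: "u \<in> Ept E i z"
    define v where "v = vec (nsmd (add_cone E x a) i) (\<lambda>j. if j < nsmd E i then u $ j else 0)"
    have first: "vec_first v (nsmd E i) = u"
      using u by (intro eq_vecI) (auto simp: v_def nsmd_add_cone Ept_def)
    then have "v \<in> Ept (add_cone E x a) i z"
      using u by (auto simp: Ept_add_cone_iff v_def nsmd_add_cone)
    with first show "u \<in> (\<lambda>v. vec_first v (nsmd E i)) ` Ept (add_cone E x a) i z" by force
  qed
qed

lemma is_cplx_add_cone: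
  assumes "is_cplx E"
  shows "is_cplx (add_cone E x a)"
  unfolding is_cplx_def
proof (intro conjI allI impI ballI)
  fix i j l
  assume h: "j < nsmd (add_cone E x a) (Suc i) \<and> l < nsmd (add_cone E x a) i
    \<and> \<not> smd (add_cone E x a) i ! l \<le> smd (add_cone E x a) (Suc i) ! j"
  show "dmat (add_cone E x a) i j l = 0"
  proof (cases "j < nsmd E (Suc i) \<and> l < nsmd E i")
    case True
    then show ?thesis using h assms by (simp add: dmat_add_cone smd_add_cone_old is_cplx_def)
  next
    case False
    then show ?thesis using h smd_add_cone_new[of a a E x] smd_add_cone_new[of "Suc a" a E x]
      by (auto simp: dmat_add_cone)
  qed
next
  fix i z v assume v: "v \<in> Ept (add_cone E x a) (Suc (Suc i)) z"
  let ?w = "dapp (add_cone E x a) (Suc i) v"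
  have "dapp E i ?w = dapp E i (dapp E (Suc i) (vec_first v (nsmd E (Suc (Suc i)))))"
    by (metis dapp_vec_first vec_first_dapp_add_cone)
  also have "\<dots> = 0\<^sub>v (nsmd E i)"
    using assms v unfolding is_cplx_def Ept_add_cone_iff by blast
  finally have first: "vec_first (dapp (add_cone E x a) i ?w) (nsmd E i) = 0\<^sub>v (nsmd E i)"
    by (simp add: vec_first_dapp_add_cone)
  show "dapp (add_cone E x a) i ?w = 0\<^sub>v (nsmd (add_cone E x a) i)"
    by (rule eq_vec_add_coneI) (use first in \<open>auto simp: dapp_add_cone_new nsmd_add_cone\<close>)
next
  obtain n where "\<forall>i\<ge>n. smd E i = []" using assms unfolding is_cplx_def by blast
  then show "\<exists>n. \<forall>i\<ge>n. smd (add_cone E x a) i = []"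
    by (intro exI[of _ "max n (Suc (Suc a))"]) (auto simp: add_cone_def)
qed

lemma dapp_add_cone_preimage:
  assumes v: "v \<in> Ept (add_cone E x a) j z" and v_new: "j = Suc a \<longrightarrow> v $ nsmd E j = 0"
    and w: "w \<in> Ept E (Suc j) z" "vec_first v (nsmd E j) = dapp E j w"
  obtains u where "u \<in> Ept (add_cone E x a) (Suc j) z" and "dapp (add_cone E x a) j u = v"
proof
  \<comment> \<open>For j = a the new summand in degree a + 1 maps identically onto the one in degree a.\<close>
  define u where "u = vec (nsmd (add_cone E x a) (Suc j))
    (\<lambda>l. if l < nsmd E (Suc j) then w $ l else if j = a then v $ nsmd E j else 0)"
  have "v \<in> carrier_vec (nsmd (add_cone E x a) j)" using v by (simp add: Ept_add_cone_iff)
  then have dim_v: "dim_vec v = nsmd (add_cone E x a) j" by (rule carrier_vecD)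
  have first: "vec_first u (nsmd E (Suc j)) = w"
    using w(1) by (intro eq_vecI) (auto simp: u_def nsmd_add_cone Ept_def)
  show "u \<in> Ept (add_cone E x a) (Suc j) z"
    using w(1) v first by (auto simp: Ept_add_cone_iff u_def nsmd_add_cone)
  show "dapp (add_cone E x a) j u = v"
  proof (rule eq_vec_add_coneI)
    show "vec_first (dapp (add_cone E x a) j u) (nsmd E j) = vec_first v (nsmd E j)"
      using first w(2) by (metis vec_first_dapp_add_cone dapp_vec_first)
    show "dapp (add_cone E x a) j u $ nsmd E j = v $ nsmd E j" if "j = a \<or> j = Suc a"
      using that v_new by (auto simp: dapp_add_cone_new u_def nsmd_add_cone)
  qed (simp_all add: dim_v)
qed

lemma image_dapp_add_cone:
  assumes "is_cplx E"
  shows "dapp (add_cone E x a) j ` Ept (add_cone E x a) (Suc j) z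
    = {v \<in> Ept (add_cone E x a) j z. vec_first v (nsmd E j) \<in> dapp E j ` Ept E (Suc j) z
                                      \<and> (j = Suc a \<longrightarrow> v $ nsmd E j = 0)}"
    (is "?image = ?rhs")
proof
  show "?image \<subseteq> ?rhs"
  proof (rule image_subsetI)
    fix u assume u: "u \<in> Ept (add_cone E x a) (Suc j) z"
    let ?u = "vec_first u (nsmd E (Suc j))"
    have u_old: "?u \<in> Ept E (Suc j) z" using u by (simp add: Ept_add_cone_iff)
    have first: "vec_first (dapp (add_cone E x a) j u) (nsmd E j) = dapp E j ?u"
      by (simp add: vec_first_dapp_add_cone dapp_vec_first)
    have "dapp (add_cone E x a) j u \<in> Ept (add_cone E x a) j z"
      using dapp_in_Ept[OF assms u_old] u first
      by (auto simp: Ept_add_cone_iff dapp_add_cone_new dapp_carrier)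
    moreover have "vec_first (dapp (add_cone E x a) j u) (nsmd E j) \<in> dapp E j ` Ept E (Suc j) z"
      unfolding first using u_old by (rule imageI)
    moreover have "j = Suc a \<longrightarrow> dapp (add_cone E x a) j u $ nsmd E j = 0"
      by (simp add: dapp_add_cone_new)
    ultimately show "dapp (add_cone E x a) j u \<in> ?rhs" by blast
  qed
  show "?rhs \<subseteq> ?image"
  proof clarify
    fix v w
    assume "v \<in> Ept (add_cone E x a) j z" "j = Suc a \<longrightarrow> v $ nsmd E j = 0"
      "w \<in> Ept E (Suc j) z" "vec_first v (nsmd E j) = dapp E j w"
    then obtain u where "u \<in> Ept (add_cone E x a) (Suc j) z" "dapp (add_cone E x a) j u = v"
      by (rule dapp_add_cone_preimage)
    then show "v \<in> ?image" by blast
  qed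
qed

lemma exact_dapp_add_cone:
  assumes "is_cplx E"
    and "{v \<in> Ept E (Suc i) z. dapp E i v = 0\<^sub>v (nsmd E i)} = dapp E (Suc i) ` Ept E (Suc (Suc i)) z"
  shows "{v \<in> Ept (add_cone E x a) (Suc i) z. dapp (add_cone E x a) i v = 0\<^sub>v (nsmd (add_cone E x a) i)}
    = dapp (add_cone E x a) (Suc i) ` Ept (add_cone E x a) (Suc (Suc i)) z"
proof -
  have "{v \<in> Ept (add_cone E x a) (Suc i) z. dapp (add_cone E x a) i v = 0\<^sub>v (nsmd (add_cone E x a) i)}
    = {v \<in> Ept (add_cone E x a) (Suc i) z.
         vec_first v (nsmd E (Suc i)) \<in> {w \<in> Ept E (Suc i) z. dapp E i w = 0\<^sub>v (nsmd E i)}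
         \<and> (Suc i = Suc a \<longrightarrow> v $ nsmd E (Suc i) = 0)}"
    by (auto simp: dapp_add_cone_eq_0_iff Ept_add_cone_iff dapp_vec_first)
  then show ?thesis by (simp add: assms(2) image_dapp_add_cone[OF assms(1)])
qed

lemma exact_eps_app_add_cone:
  assumes "is_cplx E"
    and eps: "\<And>v. eps_app M (add_cone E x a) aug' z v = eps_app M E aug z (vec_first v (nsmd E 0))"
    and "{v \<in> Ept E 0 z. eps_app M E aug z v = 0\<^sub>v (mdim M z)} = dapp E 0 ` Ept E 1 z"
  shows "{v \<in> Ept (add_cone E x a) 0 z. eps_app M (add_cone E x a) aug' z v = 0\<^sub>v (mdim M z)}
    = dapp (add_cone E x a) 0 ` Ept (add_cone E x a) 1 z"
proof -
  have "{v \<in> Ept (add_cone E x a) 0 z. eps_app M (add_cone E x a) aug' z v = 0\<^sub>v (mdim M z)}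
    = {v \<in> Ept (add_cone E x a) 0 z.
         vec_first v (nsmd E 0) \<in> {w \<in> Ept E 0 z. eps_app M E aug z w = 0\<^sub>v (mdim M z)}}"
    by (auto simp: eps Ept_add_cone_iff)
  then show ?thesis by (simp add: assms(3) image_dapp_add_cone[OF assms(1)])
qed

lemma surj_eps_app_add_cone:
  assumes eps: "\<And>v. eps_app M (add_cone E x a) aug' z v = eps_app M E aug z (vec_first v (nsmd E 0))"
    and "eps_app M E aug z ` Ept E 0 z = carrier_vec (mdim M z)"
  shows "eps_app M (add_cone E x a) aug' z ` Ept (add_cone E x a) 0 z = carrier_vec (mdim M z)"
proof -
  have "eps_app M (add_cone E x a) aug' z ` Ept (add_cone E x a) 0 z
      = eps_app M E aug z ` (\<lambda>v. vec_first v (nsmd E 0)) ` Ept (add_cone E x a) 0 z"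
    by (simp add: eps image_image)
  then show ?thesis by (simp add: vec_first_image_Ept_add_cone assms(2))
qed

lemma eps_app_add_cone:
  assumes "is_pmod M"
  shows "eps_app M (add_cone E x a) (\<lambda>j. if j < nsmd E 0 then aug j else 0\<^sub>v (mdim M x)) z v
    = eps_app M E aug z (vec_first v (nsmd E 0))"
proof (rule eq_vecI)
  let ?E = "add_cone E x a"
  let ?aug = "\<lambda>j. if j < nsmd E 0 then aug j else 0\<^sub>v (mdim M x)"
  fix r assume "r < dim_vec (eps_app M E aug z (vec_first v (nsmd E 0)))"
  then have r: "r < mdim M z" by (simp add: eps_app_def)
  let ?t = "\<lambda>j. v $ j * (mact M (smd ?E 0 ! j) z *\<^sub>v ?aug j) $ r"
  let ?A = "{j. j < nsmd ?E 0 \<and> smd ?E 0 ! j \<le> z}" and ?B = "{j. j < nsmd E 0 \<and> smd E 0 ! j \<le> z}"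
  have new_term: "?t j = 0" if "j \<in> ?A - ?B" for j
  proof -
    have "\<not> j < nsmd E 0" using that by (auto simp: smd_add_cone_old)
    then have j: "j = nsmd E 0" "a = 0" using that by (auto simp: nsmd_add_cone split: if_splits)
    then have x_j: "smd ?E 0 ! j = x" by (simp add: smd_add_cone_new)
    moreover have "x \<le> z" using that x_j by simp
    ultimately have "mact M x z \<in> carrier_mat (mdim M z) (mdim M x)"
      using assms unfolding is_pmod_def by blast
    then show ?thesis using r j x_j by (simp add: scalar_prod_def)
  qed
  have "(\<Sum>j\<in>?A. ?t j) = (\<Sum>j\<in>?B. ?t j)"
  proof (rule sum.mono_neutral_right)
    show "?B \<subseteq> ?A" by (auto simp: nsmd_add_cone smd_add_cone_old)
    show "\<forall>j\<in>?A - ?B. ?t j = 0" using new_term by blast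
  qed simp
  also have "\<dots> = (\<Sum>j | j < nsmd E 0 \<and> smd E 0 ! j \<le> z.
      vec_first v (nsmd E 0) $ j * (mact M (smd E 0 ! j) z *\<^sub>v aug j) $ r)"
    by (intro sum.cong) (auto simp: smd_add_cone_old)
  finally show "eps_app M ?E ?aug z v $ r = eps_app M E aug z (vec_first v (nsmd E 0)) $ r"
    using r by (simp add: eps_app_def)
qed (simp add: eps_app_def)

lemma res_aug_add_cone:
  assumes M: "is_pmod M" and res: "is_res_aug M E aug"
  shows "is_res_aug M (add_cone E x a) (\<lambda>j. if j < nsmd E 0 then aug j else 0\<^sub>v (mdim M x))"
proof -
  let ?E = "add_cone E x a"
  let ?aug = "\<lambda>j. if j < nsmd E 0 then aug j else 0\<^sub>v (mdim M x)"
  have cplx: "is_cplx E" and aug: "\<forall>j<nsmd E 0. aug j \<in> carrier_vec (mdim M (smd E 0 ! j))"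
    and surj: "\<And>z. eps_app M E aug z ` Ept E 0 z = carrier_vec (mdim M z)"
    and exact0: "\<And>z. {v \<in> Ept E 0 z. eps_app M E aug z v = 0\<^sub>v (mdim M z)} = dapp E 0 ` Ept E 1 z"
    and exact: "\<And>i z. {v \<in> Ept E (Suc i) z. dapp E i v = 0\<^sub>v (nsmd E i)}
                        = dapp E (Suc i) ` Ept E (Suc (Suc i)) z"
    using res unfolding is_res_aug_def by auto
  have aug_cone: "\<forall>j<nsmd ?E 0. ?aug j \<in> carrier_vec (mdim M (smd ?E 0 ! j))"
    using aug smd_add_cone_new[of 0 a E x]
    by (auto simp: nsmd_add_cone smd_add_cone_old less_Suc_eq)
  note eps = eps_app_add_cone[OF M]
  show ?thesis
    unfolding is_res_aug_def
    by (intro conjI allI is_cplx_add_cone[OF cplx] aug_cone surj_eps_app_add_cone[OF eps surj]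
        exact_eps_app_add_cone[OF cplx eps exact0] exact_dapp_add_cone[OF cplx exact])
qed

lemma proj_res_add_cone: "is_pmod M \<Longrightarrow> is_proj_res M E \<Longrightarrow> is_proj_res M (add_cone E x a)"
  unfolding is_proj_res_def using res_aug_add_cone by blast

lemma proj_res_cls_eq_if_cone_subgroup:
  assumes "A \<in> cone_subgroup" and "A = (\<lambda>i y. cls E i y - cls F i y)"
    and "is_pmod M" and "is_pmod N" and "is_proj_res M E" and "is_proj_res N F"
  shows "\<exists>E' F'. is_proj_res M E' \<and> is_proj_res N F' \<and> cls E' = cls F'"
  using assms
proof (induction arbitrary: E F rule: cone_subgroup.induct)
  case zero
  then have "cls E = cls F" by (simp add: fun_eq_iff)
  with zero.prems show ?case by blast
next
  case (add A x a)
  then have "A = (\<lambda>i y. cls E i y - cls (add_cone F x a) i y)"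
    by (simp add: fun_eq_iff cls_add_cone algebra_simps)
  with add.IH add.prems show ?case by (blast intro: proj_res_add_cone)
next
  case (sub A x a)
  then have "A = (\<lambda>i y. cls (add_cone E x a) i y - cls F i y)"
    by (simp add: fun_eq_iff cls_add_cone algebra_simps)
  with sub.IH sub.prems show ?case by (blast intro: proj_res_add_cone)
qed

section \<open>Costs of pre-matchings\<close>

lemma metric_on_finite_separated:
  fixes d :: "'p::finite \<Rightarrow> 'p \<Rightarrow> real"
  assumes "metric_on d"
  obtains \<delta> where "\<delta> > 0" and "\<And>x y. x \<noteq> y \<Longrightarrow> \<delta> \<le> d x y"
proof
  define D where "D = insert 1 ((\<lambda>(x, y). d x y) ` {(x, y). x \<noteq> y})"
  have "finite D" and "\<forall>t\<in>D. t > 0"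
    using assms unfolding D_def metric_on_def by (auto simp: order.order_iff_strict)
  then show "Min D > 0" by (simp add: D_def)
  show "Min D \<le> d x y" if "x \<noteq> y" for x y
    using \<open>finite D\<close> that by (auto simp: D_def intro!: Min_le)
qed

lemma cost_eq_0_iff:
  assumes "metric_on d"
  shows "cost d E F B = 0 \<longleftrightarrow> (\<forall>i. \<forall>j<nsmd E i. smd E i ! j = smd F i ! B i j)"
proof -
  have "cost d E F B = 0 \<longleftrightarrow> (\<forall>i. \<forall>j\<in>{..<nsmd E i}. ennreal (d (smd E i ! j) (smd F i ! B i j)) = 0)"
    unfolding cost_def bot_ennreal[symmetric] SUP_bot_conv by simp
  also have "\<dots> \<longleftrightarrow> (\<forall>i. \<forall>j<nsmd E i. smd E i ! j = smd F i ! B i j)"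
    using assms unfolding metric_on_def by (auto simp: ennreal_eq_zero_iff)
  finally show ?thesis .
qed

lemma cost_eq_0_or_ge:
  assumes "metric_on d" and "\<And>x y. x \<noteq> y \<Longrightarrow> \<delta> \<le> d x y"
  shows "cost d E F B = 0 \<or> ennreal \<delta> \<le> cost d E F B"
proof (cases "cost d E F B = 0")
  case False
  then obtain i j where j: "j < nsmd E i" and "smd E i ! j \<noteq> smd F i ! B i j"
    unfolding cost_eq_0_iff[OF assms(1)] by blast
  then have "ennreal \<delta> \<le> ennreal (d (smd E i ! j) (smd F i ! B i j))"
    using assms(2) by (simp add: ennreal_leI)
  also have "\<dots> \<le> cost d E F B"
    unfolding cost_def using j by (intro SUP_upper2[of i] SUP_upper) auto
  finally show ?thesis by simp
qed simp

lemma INF_eq_0_or_ge: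
  fixes f :: "'a \<Rightarrow> ennreal"
  assumes "\<And>i. i \<in> I \<Longrightarrow> f i = 0 \<or> \<delta> \<le> f i"
  shows "(INF i\<in>I. f i) = 0 \<or> \<delta> \<le> (INF i\<in>I. f i)"
proof (cases "\<exists>i\<in>I. f i = 0")
  case True
  then show ?thesis by (metis INF_lower le_zero_eq)
next
  case False
  then show ?thesis using assms by (auto intro: INF_greatest)
qed

lemma INF_eq_0_iff_of_gap:
  fixes f :: "'a \<Rightarrow> ennreal"
  assumes "\<delta> > 0" and "\<And>i. i \<in> I \<Longrightarrow> f i = 0 \<or> \<delta> \<le> f i"
  shows "(INF i\<in>I. f i) = 0 \<longleftrightarrow> (\<exists>i\<in>I. f i = 0)"
proof
  assume "(INF i\<in>I. f i) = 0"
  show "\<exists>i\<in>I. f i = 0"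
  proof (rule ccontr)
    assume "\<not> (\<exists>i\<in>I. f i = 0)"
    then have "\<delta> \<le> (INF i\<in>I. f i)" using assms(2) by (auto intro: INF_greatest)
    with \<open>\<delta> > 0\<close> \<open>(INF i\<in>I. f i) = 0\<close> show False by simp
  qed
qed (metis INF_lower le_zero_eq)

lemma distR'_eq_0_or_ge:
  assumes "metric_on d" and "\<And>x y. x \<noteq> y \<Longrightarrow> \<delta> \<le> d x y"
  shows "distR' d E F = 0 \<or> ennreal \<delta> \<le> distR' d E F"
  unfolding distR'_def by (intro INF_eq_0_or_ge cost_eq_0_or_ge[OF assms])

lemma distR'_eq_0_iff:
  fixes d :: "'p::finite \<Rightarrow> 'p \<Rightarrow> real"
  assumes "metric_on d"
  shows "distR' d E F = 0 \<longleftrightarrow> (\<exists>B. prematching E F B \<and> cost d E F B = 0)"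
proof -
  obtain \<delta> where "\<delta> > 0" and sep: "\<And>x y. x \<noteq> y \<Longrightarrow> \<delta> \<le> d x y"
    using metric_on_finite_separated[OF assms] by blast
  have "distR' d E F = 0 \<longleftrightarrow> (\<exists>B\<in>{B. prematching E F B}. cost d E F B = 0)"
    unfolding distR'_def
    by (rule INF_eq_0_iff_of_gap[of "ennreal \<delta>"])
      (use \<open>\<delta> > 0\<close> cost_eq_0_or_ge[OF assms sep] in auto)
  then show ?thesis by simp
qed

lemma distB'_eq_0_iff:
  fixes d :: "'p::{finite,order} \<Rightarrow> 'p \<Rightarrow> real"
  assumes "metric_on d"
  shows "distB' d M N = 0 \<longleftrightarrow>
    (\<exists>E F B. is_proj_res M E \<and> is_proj_res N F \<and> (\<forall>i. nsmd E i = nsmd F i)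
             \<and> prematching E F B \<and> cost d E F B = 0)"
proof -
  obtain \<delta> where "\<delta> > 0" and sep: "\<And>x y. x \<noteq> y \<Longrightarrow> \<delta> \<le> d x y"
    using metric_on_finite_separated[OF assms] by blast
  have "distB' d M N = 0 \<longleftrightarrow> (\<exists>EF\<in>Res M N. distR' d (fst EF) (snd EF) = 0)"
    unfolding distB'_def
    by (rule INF_eq_0_iff_of_gap[of "ennreal \<delta>"])
      (use \<open>\<delta> > 0\<close> distR'_eq_0_or_ge[OF assms sep] in auto)
  then show ?thesis by (auto simp: Res_def distR'_eq_0_iff[OF assms])
qed

lemma distB'_le_distB: "distB' d M N \<le> distB d M N"
  unfolding distB'_def distB_def distR'_def distR_def matching_def
  by (intro INF_mono) (auto intro: INF_superset_mono)

lemma cls_eq_iff: "cls E = cls F \<longleftrightarrow> (\<forall>i. mset (smd E i) = mset (smd F i))"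
  by (simp add: cls_def fun_eq_iff multiset_eq_iff)

lemma mset_eq_if_bij_betw_nth:
  assumes "bij_betw b {..<length xs} {..<length ys}" and "\<And>j. j < length xs \<Longrightarrow> xs ! j = ys ! b j"
  shows "mset xs = mset ys"
proof -
  have "mset xs = image_mset (nth xs) (mset_set {..<length xs})"
    by (metis map_nth mset_map mset_set_upto_eq_mset_upto)
  also have "\<dots> = image_mset (nth ys \<circ> b) (mset_set {..<length xs})"
    using assms(2) by (intro image_mset_cong) (simp add: mset_set_upto_eq_mset_upto)
  also have "\<dots> = image_mset (nth ys) (image_mset b (mset_set {..<length xs}))"
    by (simp add: image_mset.compositionality)
  also have "\<dots> = image_mset (nth ys) (mset_set {..<length ys})"
    using assms(1) by (simp add: image_mset_mset_set bij_betw_def)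
  also have "\<dots> = mset ys" by (metis map_nth mset_map mset_set_upto_eq_mset_upto)
  finally show ?thesis .
qed

lemma prematching_cost_0_iff_cls_eq:
  assumes "metric_on d"
  shows "(\<exists>B. prematching E F B \<and> cost d E F B = 0) \<longleftrightarrow> cls E = cls F"
proof
  assume "\<exists>B. prematching E F B \<and> cost d E F B = 0"
  then obtain B where "prematching E F B" and "\<forall>i. \<forall>j<nsmd E i. smd E i ! j = smd F i ! B i j"
    using cost_eq_0_iff[OF assms] by blast
  then have "mset (smd E i) = mset (smd F i)" for i
    unfolding prematching_def nsmd_def by (intro mset_eq_if_bij_betw_nth[of "B i"]) auto
  then show "cls E = cls F" by (simp add: cls_eq_iff)
next
  assume "cls E = cls F"
  then have "\<forall>i. \<exists>p. p permutes {..<length (smd F i)} \<and> permute_list p (smd F i) = smd E i"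
    unfolding cls_eq_iff by (metis mset_eq_permutation)
  then obtain B where B: "\<And>i. B i permutes {..<length (smd F i)}"
    and B_nth: "\<And>i. permute_list (B i) (smd F i) = smd E i"
    by metis
  have "nsmd E i = nsmd F i" for i
    unfolding nsmd_def using B_nth[of i] length_permute_list by metis
  then have "prematching E F B" using B by (simp add: prematching_def nsmd_def permutes_imp_bij)
  moreover have "cost d E F B = 0" unfolding cost_eq_0_iff[OF assms]
    using B B_nth \<open>\<And>i. nsmd E i = nsmd F i\<close> by (metis nsmd_def permute_list_nth)
  ultimately show "\<exists>B. prematching E F B \<and> cost d E F B = 0" by blast
qed

lemma res_cost_0_iff_equal_cls:
  fixes d :: "'p::{finite,order} \<Rightarrow> 'p \<Rightarrow> real"
  assumes "metric_on d"
  shows "(\<exists>E F B. is_proj_res M E \<and> is_proj_res N F \<and> (\<forall>i. nsmd E i = nsmd F i)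
                  \<and> prematching E F B \<and> cost d E F B = 0)
    \<longleftrightarrow> (\<exists>E F. is_proj_res M E \<and> is_proj_res N F \<and> cls E = cls F)"
proof -
  have "nsmd E i = nsmd F i" if "cls E = cls F" for E F :: "('p, 'k) cplx" and i
    using that unfolding cls_eq_iff nsmd_def by (metis size_mset)
  then show ?thesis using prematching_cost_0_iff_cls_eq[OF assms] by metis
qed

lemma equal_cls_resolutions_iff_alpha_hat_eq:
  fixes PM PN :: "('p::{finite,order}, 'k::field) cplx"
  assumes "is_pmod M" and "is_pmod N" and "is_proj_res M PM" and "is_proj_res N PN"
  shows "(\<exists>E F. is_proj_res M E \<and> is_proj_res N F \<and> cls E = cls F)
    \<longleftrightarrow> alpha_hat (cls PM) = alpha_hat (cls PN)"
proof
  assume "\<exists>E F. is_proj_res M E \<and> is_proj_res N F \<and> cls E = cls F"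
  then show "alpha_hat (cls PM) = alpha_hat (cls PN)"
    using assms(3,4) proj_res_alpha_hat_unique by metis
next
  assume "alpha_hat (cls PM) = alpha_hat (cls PN)"
  then have "(\<lambda>i x. cls PM i x - cls PN i x) \<in> cone_subgroup"
    using assms(3,4) by (intro cls_diff_in_cone_subgroup proj_res_imp_cplx)
  then show "\<exists>E F. is_proj_res M E \<and> is_proj_res N F \<and> cls E = cls F"
    using assms by (intro proj_res_cls_eq_if_cone_subgroup) simp_all
qed

lemma cone_subgroup_iff_alpha_hat_eq:
  fixes PM PN :: "('p::{finite,order}, 'k::field) cplx"
  assumes "is_pmod M" and "is_pmod N" and "is_proj_res M PM" and "is_proj_res N PN"
  shows "(\<lambda>i x. cls PM i x - cls PN i x) \<in> cone_subgroup \<longleftrightarrow> alpha_hat (cls PM) = alpha_hat (cls PN)"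
proof
  assume "(\<lambda>i x. cls PM i x - cls PN i x) \<in> cone_subgroup"
  then have "\<exists>E F. is_proj_res M E \<and> is_proj_res N F \<and> cls E = cls F"
    using assms by (intro proj_res_cls_eq_if_cone_subgroup) simp_all
  then show "alpha_hat (cls PM) = alpha_hat (cls PN)"
    using equal_cls_resolutions_iff_alpha_hat_eq[OF assms] by blast
qed (use assms(3,4) in \<open>intro cls_diff_in_cone_subgroup proj_res_imp_cplx\<close>)

theorem lemma4p10:
  fixes d :: "'p::{finite, order} \<Rightarrow> 'p \<Rightarrow> real"
  assumes "metric_on d"
  shows
   "(\<forall>E F :: ('p, 'k::field) cplx. is_cplx E \<and> is_cplx F \<longrightarrow>
       (distR' d E F = 0 \<longleftrightarrow> (\<exists>B. prematching E F B \<and> cost d E F B = 0))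
     \<and> ((\<exists>B. prematching E F B \<and> cost d E F B = 0) \<longleftrightarrow> cls E = cls F))
  \<and> (\<forall>(M :: ('p, 'k) pmod) N PM PN.
       is_pmod M \<and> is_pmod N \<and> is_min_proj_res M PM \<and> is_min_proj_res N PN \<longrightarrow>
       (distB' d M N = 0 \<longleftrightarrow>
          (\<exists>E F B. is_proj_res M E \<and> is_proj_res N F \<and> (\<forall>i. nsmd E i = nsmd F i)
                   \<and> prematching E F B \<and> cost d E F B = 0))
     \<and> ((\<exists>E F B. is_proj_res M E \<and> is_proj_res N F \<and> (\<forall>i. nsmd E i = nsmd F i)
                   \<and> prematching E F B \<and> cost d E F B = 0) \<longleftrightarrow>
          (\<lambda>i x. cls PM i x - cls PN i x) \<in> cone_subgroup)
     \<and> ((\<lambda>i x. cls PM i x - cls PN i x) \<in> cone_subgroup \<longleftrightarrow>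
          alpha_hat (cls PM) = alpha_hat (cls PN))
     \<and> (distB d M N = 0 \<longrightarrow> alpha_hat (cls PM) = alpha_hat (cls PN)))"
proof (intro conjI allI impI)
  fix E F :: "('p, 'k) cplx"
  show "distR' d E F = 0 \<longleftrightarrow> (\<exists>B. prematching E F B \<and> cost d E F B = 0)"
    by (rule distR'_eq_0_iff[OF assms])
  show "(\<exists>B. prematching E F B \<and> cost d E F B = 0) \<longleftrightarrow> cls E = cls F"
    by (rule prematching_cost_0_iff_cls_eq[OF assms])
next
  fix M N :: "('p, 'k) pmod" and PM PN :: "('p, 'k) cplx"
  assume "is_pmod M \<and> is_pmod N \<and> is_min_proj_res M PM \<and> is_min_proj_res N PN"
  then have res: "is_pmod M" "is_pmod N" "is_proj_res M PM" "is_proj_res N PN"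
    by (auto intro: min_proj_res_imp_proj_res)
  let ?b = "\<exists>E F B. is_proj_res M E \<and> is_proj_res N F \<and> (\<forall>i. nsmd E i = nsmd F i)
                   \<and> prematching E F B \<and> cost d E F B = 0"
  have b_iff_d: "?b \<longleftrightarrow> alpha_hat (cls PM) = alpha_hat (cls PN)"
    by (rule trans[OF res_cost_0_iff_equal_cls[OF assms] equal_cls_resolutions_iff_alpha_hat_eq[OF res]])
  note c_iff_d = cone_subgroup_iff_alpha_hat_eq[OF res]
  show "distB' d M N = 0 \<longleftrightarrow> ?b" by (rule distB'_eq_0_iff[OF assms])
  show "?b \<longleftrightarrow> (\<lambda>i x. cls PM i x - cls PN i x) \<in> cone_subgroup" using b_iff_d c_iff_d by simp
  show "(\<lambda>i x. cls PM i x - cls PN i x) \<in> cone_subgroup \<longleftrightarrow> alpha_hat (cls PM) = alpha_hat (cls PN)"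
    by (rule c_iff_d)
  show "alpha_hat (cls PM) = alpha_hat (cls PN)" if "distB d M N = 0"
    using that distB'_le_distB[of d M N] distB'_eq_0_iff[OF assms, of M N] b_iff_d by simp
qed

end
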